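(* Let $\Lambda$ be a (non-degenerate) real interval. A PAF $\psi:\mathcal P^N\to\mathcal P$ is Level-SP, unanimous and strong plausibility preserving if and only if it is dictatorial, i.e. there is $i\in N$ with $\psi(\mathbf p)=p_i$ for all $\mathbf p$.
   Context: Let $N=\{1,\dots,n\}$, $\mathcal P$ the Borel probability measures on $\Lambda$, $\mathcal C$ the CDFs on $\Lambda$, $\pi(p)(a)=p(\{x\in\Lambda:x\le a\})$. A PAF is a map $\psi:\mathcal P^N\to\mathcal P$ with associated CAF $\Psi$ given by $\Psi(\pi(p_1),\dots,\pi(p_n))=\pi(\psi(p_1,\dots,p_n))$; $P_i=\pi(p_i)$. $\mathbf z_{-i}(z_i')$ is $\mathbf z$ with $i$-th coordinate replaced by $z_i'$. $\psi$ is Level-SP if for every $i$, $\mathbf P$, $P_i'$, $a$: $P_i(a)<\Psi(\mathbf P)(a)\Rightarrow\Psi(\mathbf P)(a)\le\Psi(\mathbf P_{-i}(P_i'))(a)$ and $P_i(a)>\Psi(\mathbf P)(a)\Rightarrow\Psi(\mathbf P)(a)\ge\Psi(\mathbf P_{-i}(P_i'))(a)$. $\psi$ is unanimous if $\psi(p,\dots,p)=p$. $\psi$ is strong plausibility preserving if for every profile $\mathbf p$ and every Borel set $A\subseteq\Lambda$: if $p_i(A)>0$ for all $i\in N$ then $\psi(\mathbf p)(A)>0$. *)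

theory Defs
  imports "HOL-Probability.Probability"
begin

definition probs :: "real set \<Rightarrow> real measure set" where
  "probs L = {p. prob_space p \<and> sets p = sets (restrict_space borel L)}"

definition profiles :: "real set \<Rightarrow> ('n \<Rightarrow> real measure) set" where
  "profiles L = {ps. \<forall>i. ps i \<in> probs L}"

definition cdf_of :: "real set \<Rightarrow> real measure \<Rightarrow> real \<Rightarrow> real" where
  "cdf_of L p a = measure p {x \<in> L. x \<le> a}"

definition is_PAF :: "real set \<Rightarrow> (('n \<Rightarrow> real measure) \<Rightarrow> real measure) \<Rightarrow> bool" where
  "is_PAF L \<psi> \<longleftrightarrow> (\<forall>ps \<in> profiles L. \<psi> ps \<in> probs L)"

definition level_SP :: "real set \<Rightarrow> (('n \<Rightarrow> real measure) \<Rightarrow> real measure) \<Rightarrow> bool" where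
  "level_SP L \<psi> \<longleftrightarrow>
     (\<forall>i. \<forall>ps \<in> profiles L. \<forall>q \<in> probs L. \<forall>a \<in> L.
        (cdf_of L (ps i) a < cdf_of L (\<psi> ps) a \<longrightarrow>
           cdf_of L (\<psi> ps) a \<le> cdf_of L (\<psi> (ps(i := q))) a) \<and>
        (cdf_of L (ps i) a > cdf_of L (\<psi> ps) a \<longrightarrow>
           cdf_of L (\<psi> ps) a \<ge> cdf_of L (\<psi> (ps(i := q))) a))"

definition unanimous :: "real set \<Rightarrow> (('n \<Rightarrow> real measure) \<Rightarrow> real measure) \<Rightarrow> bool" where
  "unanimous L \<psi> \<longleftrightarrow> (\<forall>p \<in> probs L. \<psi> (\<lambda>_. p) = p)"

definition strong_plausibility_preserving ::
  "real set \<Rightarrow> (('n \<Rightarrow> real measure) \<Rightarrow> real measure) \<Rightarrow> bool" where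
  "strong_plausibility_preserving L \<psi> \<longleftrightarrow>
     (\<forall>ps \<in> profiles L. \<forall>A \<in> sets (restrict_space borel L).
        (\<forall>i. measure (ps i) A > 0) \<longrightarrow> measure (\<psi> ps) A > 0)"

definition dictatorial :: "real set \<Rightarrow> (('n \<Rightarrow> real measure) \<Rightarrow> real measure) \<Rightarrow> bool" where
  "dictatorial L \<psi> \<longleftrightarrow> (\<exists>i. \<forall>ps \<in> profiles L. \<psi> ps = ps i)"

end

theory Submission
  imports Defs
begin

text \<open>
  Level-SP makes the aggregate CDF at a level a depend only on the reports at a, and it does not
  move when a report changes without crossing it. With unanimity this puts the aggregate between
  the smallest and the largest report, and strong plausibility preservation forces it to be one of
  the reports: otherwise one could lower the reports above it and add a small common atom at a
  point slightly above a where the aggregate has no atom, without changing the aggregate there or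
  below. Hence on profiles whose reports at a are 0 or 1 the aggregate is 0 or 1, as decided by
  the coalition reporting 1. Test profiles made of two-point measures, again combined with strong
  plausibility preservation, show that the decisive coalitions do not depend on the level and form
  an ultrafilter on the finite set of voters. It is generated by a single voter, whose CDF the
  aggregate therefore reproduces at every level, and a probability on an interval is determined
  by its CDF.
\<close>

section \<open>Distribution functions on an interval\<close>

lemma probs_sets: "p \<in> probs L \<Longrightarrow> sets p = sets (restrict_space borel L)"
  by (simp add: probs_def)

lemma probs_prob_space: "p \<in> probs L \<Longrightarrow> prob_space p"
  by (simp add: probs_def)

lemma finite_measure_probs: "p \<in> probs L \<Longrightarrow> finite_measure p"
  by (intro prob_space.finite_measure probs_prob_space)

lemma space_probs: "p \<in> probs L \<Longrightarrow> space p = L"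
  using sets_eq_imp_space_eq[OF probs_sets] by (simp add: space_restrict_space)

lemma Collect_in_sets_restrict_borel:
  "Measurable.pred borel P \<Longrightarrow> {x \<in> L. P x} \<in> sets (restrict_space borel (L::real set))"
  unfolding sets_restrict_space by (rule image_eqI[of _ _ "{x. P x}"]) auto

lemma atMost_in_sets_restrict_borel [simp]:
  "{x \<in> L. x \<le> a} \<in> sets (restrict_space borel (L::real set))"
  by (rule Collect_in_sets_restrict_borel) measurable

lemma Ioc_in_sets_restrict_borel [simp]:
  "{x \<in> L. a < x \<and> x \<le> b} \<in> sets (restrict_space borel (L::real set))"
  by (rule Collect_in_sets_restrict_borel) measurable

lemma singleton_in_sets_restrict_borel [simp]:
  "u \<in> L \<Longrightarrow> {u} \<in> sets (restrict_space borel (L::real set))"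
  using Collect_in_sets_restrict_borel[of "\<lambda>x. x = u" L] by (simp add: Collect_conj_eq)

lemma exists_null_singleton_between:
  fixes a b :: real
  assumes "finite_measure M" "a < b"
  obtains u where "a < u" "u < b" "measure M {u} = 0"
proof -
  have "\<not> {a<..<b} \<subseteq> {x. measure M {x} \<noteq> 0}"
    using finite_measure.countable_support[OF assms(1)] assms(2)
    by (metis countable_subset uncountable_open_interval)
  then show ?thesis using that by auto
qed

text \<open>A probability on L viewed as a distribution on the real line, to reuse the library's
  results about \<^const>\<open>cdf\<close>.\<close>

definition borel_ext :: "real measure \<Rightarrow> real measure" where
  "borel_ext p = distr p borel (\<lambda>x. x)"

lemma measurable_ident_probs:
  assumes "p \<in> probs L"
  shows "(\<lambda>x. x) \<in> p \<rightarrow>\<^sub>M borel"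
proof -
  have "(\<lambda>x. x) \<in> restrict_space borel L \<rightarrow>\<^sub>M borel" by (simp add: measurable_restrict_space1)
  then show ?thesis by (simp add: measurable_cong_sets[OF probs_sets[OF assms] refl])
qed

lemma real_distribution_borel_ext: "p \<in> probs L \<Longrightarrow> real_distribution (borel_ext p)"
  unfolding borel_ext_def
  by (intro prob_space.real_distribution_distr probs_prob_space measurable_ident_probs)

lemma emeasure_borel_ext:
  "p \<in> probs L \<Longrightarrow> B \<in> sets borel \<Longrightarrow> emeasure (borel_ext p) B = emeasure p (L \<inter> B)"
  unfolding borel_ext_def
  by (simp add: emeasure_distr measurable_ident_probs space_probs Int_commute)

lemma measure_borel_ext:
  "p \<in> probs L \<Longrightarrow> B \<in> sets borel \<Longrightarrow> measure (borel_ext p) B = measure p (L \<inter> B)"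
  by (simp add: measure_def emeasure_borel_ext)

lemma cdf_borel_ext: "p \<in> probs L \<Longrightarrow> cdf (borel_ext p) = cdf_of L p"
  by (auto simp: cdf_def cdf_of_def measure_borel_ext Int_def)

lemma cdf_of_nonneg: "0 \<le> cdf_of L p a"
  by (simp add: cdf_of_def)

lemma cdf_of_le_1: "p \<in> probs L \<Longrightarrow> cdf_of L p a \<le> 1"
  using real_distribution.cdf_bounded_prob[OF real_distribution_borel_ext]
  by (simp add: cdf_borel_ext)

lemma cdf_of_mono: "p \<in> probs L \<Longrightarrow> a \<le> b \<Longrightarrow> cdf_of L p a \<le> cdf_of L p b"
  using finite_borel_measure.cdf_nondecreasing[OF
      real_distribution.finite_borel_measure_M[OF real_distribution_borel_ext]]
  by (simp add: cdf_borel_ext)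

lemma cdf_of_eq_1: "p \<in> probs L \<Longrightarrow> L \<subseteq> {..a} \<Longrightarrow> cdf_of L p a = 1"
proof -
  assume p: "p \<in> probs L" and "L \<subseteq> {..a}"
  then have "{x \<in> L. x \<le> a} = space p" by (auto simp: space_probs)
  then show ?thesis
    using prob_space.prob_space[OF probs_prob_space[OF p]] by (simp add: cdf_of_def)
qed

lemma cdf_of_right_continuous:
  assumes p: "p \<in> probs L" and lt: "cdf_of L p a < h"
  obtains b where "a < b" "cdf_of L p b < h"
proof -
  interpret real_distribution "borel_ext p" by (rule real_distribution_borel_ext[OF p])
  have "(cdf_of L p \<longlongrightarrow> cdf_of L p a) (at_right a)"
    using cdf_is_right_cont[of a] by (simp add: continuous_within cdf_borel_ext[OF p])
  from order_tendstoD(2)[OF this lt] obtain b where "a < b" "\<forall>y>a. y < b \<longrightarrow> cdf_of L p y < h"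
    by (auto simp: eventually_at_right_field)
  then show ?thesis using that[of "(a + b) / 2"] by simp
qed

lemma cdf_of_eq_outside:
  assumes L: "is_interval L" and x: "x \<notin> L" and p: "p \<in> probs L" and q: "q \<in> probs L"
  shows "cdf_of L p x = cdf_of L q x"
proof (cases "L \<subseteq> {..x}")
  case True
  then show ?thesis using cdf_of_eq_1[OF p] cdf_of_eq_1[OF q] by simp
next
  case False
  then obtain z where z: "z \<in> L" "x < z" by (auto simp: subset_eq not_le)
  have empty: "{y \<in> L. y \<le> x} = {}"
    using mem_is_interval_1_I[OF L _ z(1), of _ x] z(2) x by auto
  show ?thesis unfolding cdf_of_def empty by simp
qed

lemma (in real_distribution) measure_singleton_cdf: "measure M {u} = cdf M u - measure M {..<u}"
proof -
  have "cdf M u = measure M {..<u} + measure M {u}"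
    unfolding cdf_def ivl_disj_un(2)[symmetric] by (subst finite_measure_Union) auto
  then show ?thesis by simp
qed

lemma measure_singleton_eq_if_cdf_of_eq:
  assumes L: "is_interval L" and p: "p \<in> probs L" and q: "q \<in> probs L" and u: "u \<in> L"
    and eq: "\<And>x. x \<in> L \<Longrightarrow> x \<le> u \<Longrightarrow> cdf_of L p x = cdf_of L q x"
  shows "measure p {u} = measure q {u}"
proof -
  interpret P: real_distribution "borel_ext p" by (rule real_distribution_borel_ext[OF p])
  interpret Q: real_distribution "borel_ext q" by (rule real_distribution_borel_ext[OF q])
  have eq_all: "cdf (borel_ext p) x = cdf (borel_ext q) x" if "x \<le> u" for x
    using eq[OF _ that] cdf_of_eq_outside[OF L _ p q, of x]
    by (cases "x \<in> L") (auto simp: cdf_borel_ext[OF p] cdf_borel_ext[OF q])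
  have "eventually (\<lambda>x. cdf (borel_ext p) x = cdf (borel_ext q) x) (at_left u)"
    using eq_all by (auto simp: eventually_at_left_field intro!: exI[of _ "u - 1"])
  then have "(cdf (borel_ext p) \<longlongrightarrow> measure (borel_ext q) {..<u}) (at_left u)"
    by (simp add: tendsto_cong Q.cdf_at_left)
  then have "measure (borel_ext p) {..<u} = measure (borel_ext q) {..<u}"
    using P.cdf_at_left[of u] by (metis tendsto_unique trivial_limit_at_left_real)
  then have "measure (borel_ext p) {u} = measure (borel_ext q) {u}"
    using P.measure_singleton_cdf Q.measure_singleton_cdf eq_all[of u] by simp
  then show ?thesis using u by (simp add: measure_borel_ext[OF p] measure_borel_ext[OF q])
qed

lemma probs_eqI_cdf_of:
  assumes L: "is_interval L" and p: "p \<in> probs L" and q: "q \<in> probs L"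
    and eq: "\<And>a. a \<in> L \<Longrightarrow> cdf_of L p a = cdf_of L q a"
  shows "p = q"
proof (rule measure_eqI)
  show "sets p = sets q" using p q by (simp add: probs_sets)
next
  have "cdf (borel_ext p) = cdf (borel_ext q)"
    using eq cdf_of_eq_outside[OF L _ p q] by (auto simp: cdf_borel_ext[OF p] cdf_borel_ext[OF q])
  then have ext: "borel_ext p = borel_ext q"
    by (intro cdf_unique real_distribution_borel_ext[OF p] real_distribution_borel_ext[OF q])
  fix A assume "A \<in> sets p"
  then obtain B where "B \<in> sets borel" "A = L \<inter> B"
    using probs_sets[OF p] by (auto simp: sets_restrict_space)
  then show "emeasure p A = emeasure q A"
    using ext emeasure_borel_ext[OF p] emeasure_borel_ext[OF q] by metis
qed

lemma measure_Ioc_cdf_of: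
  assumes p: "p \<in> probs L" and "a \<le> b"
  shows "measure p {x \<in> L. a < x \<and> x \<le> b} = cdf_of L p b - cdf_of L p a"
proof -
  interpret finite_measure p by (rule finite_measure_probs[OF p])
  have "{x \<in> L. a < x \<and> x \<le> b} = {x \<in> L. x \<le> b} - {x \<in> L. x \<le> a}" using \<open>a \<le> b\<close> by auto
  moreover have "measure p ({x \<in> L. x \<le> b} - {x \<in> L. x \<le> a})
      = measure p {x \<in> L. x \<le> b} - measure p {x \<in> L. x \<le> a}"
    using probs_sets[OF p] \<open>a \<le> b\<close> by (intro finite_measure_Diff) auto
  ultimately show ?thesis by (simp add: cdf_of_def)
qed

section \<open>Finite mixtures of point masses\<close>

text \<open>Atoms outside L are moved to an arbitrary point of L, which keeps the map measurable; all
  mixtures used below have their atoms in L.\<close>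

definition point_mixture :: "real set \<Rightarrow> (real \<times> real) list \<Rightarrow> real measure" where
  "point_mixture L xs = distr (measure_pmf (pmf_of_list xs)) (restrict_space borel L)
     (\<lambda>x. if x \<in> L then x else (SOME y. y \<in> L))"

lemma measurable_point_mixture_map:
  assumes "L \<noteq> {}"
  shows "(\<lambda>x. if x \<in> L then x else (SOME y. y \<in> L)) \<in> measure_pmf M \<rightarrow>\<^sub>M restrict_space borel L"
proof -
  have "(SOME y. y \<in> L) \<in> L" using assms by (simp add: some_in_eq)
  then show ?thesis by (auto simp: space_restrict_space)
qed

lemma nonempty_if_pmf_of_list_wf:
  fixes xs :: "(real \<times> real) list"
  assumes "pmf_of_list_wf xs" "set (map fst xs) \<subseteq> L"
  shows "L \<noteq> {}"
  using assms unfolding pmf_of_list_wf_def by (cases xs) auto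

lemma point_mixture_in_probs:
  assumes "pmf_of_list_wf xs" "set (map fst xs) \<subseteq> L"
  shows "point_mixture L xs \<in> probs L"
  unfolding probs_def point_mixture_def
  using measurable_point_mixture_map[OF nonempty_if_pmf_of_list_wf[OF assms]]
  by (auto intro!: prob_space.prob_space_distr prob_space_measure_pmf)

lemma measure_point_mixture:
  assumes wf: "pmf_of_list_wf xs" and atoms: "set (map fst xs) \<subseteq> L"
    and A: "A \<in> sets (restrict_space borel L)"
  shows "measure (point_mixture L xs) A = sum_list (map snd (filter (\<lambda>x. fst x \<in> A) xs))"
proof -
  let ?f = "\<lambda>x. if x \<in> L then x else (SOME y. y \<in> L)"
  note f = measurable_point_mixture_map[OF nonempty_if_pmf_of_list_wf[OF wf atoms]]
  have "measure (point_mixture L xs) A = measure (pmf_of_list xs) (?f -` A)"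
    unfolding point_mixture_def by (subst measure_distr[OF f A]) simp
  also have "\<dots> = sum_list (map snd (filter (\<lambda>x. fst x \<in> ?f -` A) xs))"
    by (rule measure_pmf_of_list[OF wf])
  also have "filter (\<lambda>x. fst x \<in> ?f -` A) xs = filter (\<lambda>x. fst x \<in> A) xs"
    using atoms by (intro filter_cong) auto
  finally show ?thesis .
qed

lemma cdf_point_mixture:
  assumes "pmf_of_list_wf xs" "set (map fst xs) \<subseteq> L"
  shows "cdf_of L (point_mixture L xs) a = sum_list (map snd (filter (\<lambda>x. fst x \<le> a) xs))"
proof -
  have "filter (\<lambda>x. fst x \<in> {x \<in> L. x \<le> a}) xs = filter (\<lambda>x. fst x \<le> a) xs"
    using assms(2) by (intro filter_cong) auto
  then show ?thesis unfolding cdf_of_def by (simp add: measure_point_mixture[OF assms])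
qed

definition two_point :: "real set \<Rightarrow> real \<Rightarrow> real \<Rightarrow> real \<Rightarrow> real measure" where
  "two_point L a c w = point_mixture L [(a, w), (c, 1 - w)]"

lemma two_point_wf: "0 \<le> w \<Longrightarrow> w \<le> 1 \<Longrightarrow> pmf_of_list_wf [(a, w), (c, 1 - w)]"
  for w :: real
  by (simp add: pmf_of_list_wf_def)

lemma two_point_in_probs: "a \<in> L \<Longrightarrow> c \<in> L \<Longrightarrow> 0 \<le> w \<Longrightarrow> w \<le> 1 \<Longrightarrow> two_point L a c w \<in> probs L"
  unfolding two_point_def by (intro point_mixture_in_probs two_point_wf) auto

lemma cdf_two_point:
  "a \<in> L \<Longrightarrow> c \<in> L \<Longrightarrow> a < c \<Longrightarrow> 0 \<le> w \<Longrightarrow> w \<le> 1 \<Longrightarrow>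
   cdf_of L (two_point L a c w) x = (if x < a then 0 else if x < c then w else 1)"
  unfolding two_point_def by (subst cdf_point_mixture[OF two_point_wf]) auto

lemma measure_two_point:
  "a \<in> L \<Longrightarrow> c \<in> L \<Longrightarrow> 0 \<le> w \<Longrightarrow> w \<le> 1 \<Longrightarrow> A \<in> sets (restrict_space borel L) \<Longrightarrow>
   measure (two_point L a c w) A = (if a \<in> A then w else 0) + (if c \<in> A then 1 - w else 0)"
  unfolding two_point_def by (subst measure_point_mixture[OF two_point_wf]) auto

section \<open>Level-SP aggregators\<close>

lemma profilesI: "(\<And>i. ps i \<in> probs L) \<Longrightarrow> ps \<in> profiles L"
  by (simp add: profiles_def)

lemma profilesD: "ps \<in> profiles L \<Longrightarrow> ps i \<in> probs L"
  by (simp add: profiles_def)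

lemma profiles_update: "ps \<in> profiles L \<Longrightarrow> q \<in> probs L \<Longrightarrow> ps(i := q) \<in> profiles L"
  by (simp add: profiles_def)

lemma profiles_const: "p \<in> probs L \<Longrightarrow> (\<lambda>_. p) \<in> profiles L"
  by (simp add: profiles_def)

lemma finite_pos_lower_bound:
  fixes f :: "'n::finite \<Rightarrow> real"
  assumes "\<And>i. 0 < f i"
  obtains \<epsilon> where "0 < \<epsilon>" "\<forall>i. \<epsilon> < f i"
proof
  have "0 < Min (range f)" using assms by simp
  then show "0 < Min (range f) / 2" by simp
  show "\<forall>i. Min (range f) / 2 < f i"
  proof
    fix i
    have "Min (range f) \<le> f i" by (rule Min_le) auto
    with \<open>0 < Min (range f)\<close> show "Min (range f) / 2 < f i" by linarith
  qed
qed

definition same_side :: "real \<Rightarrow> real \<Rightarrow> real \<Rightarrow> bool" where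
  "same_side t x y \<longleftrightarrow> x = y \<or> (x < t \<and> y < t) \<or> (t < x \<and> t < y)"

lemma finite_ultrafilter_principal:
  fixes W :: "'n::finite set \<Rightarrow> bool"
  assumes empty: "\<not> W {}" and mono: "\<And>S T. W S \<Longrightarrow> S \<subseteq> T \<Longrightarrow> W T"
    and Int: "\<And>S T. W S \<Longrightarrow> W T \<Longrightarrow> W (S \<inter> T)" and ultra: "\<And>S. W S \<or> W (- S)"
  shows "\<exists>d. \<forall>S. W S \<longleftrightarrow> d \<in> S"
proof -
  have Inter: "W (\<Inter>\<S>)" if "finite \<S>" "\<S> \<noteq> {}" "\<forall>S\<in>\<S>. W S" for \<S>
    using that by (induction rule: finite_ne_induct) (auto intro: Int)
  have "W UNIV" using ultra mono by blast
  then have "W (\<Inter>{S. W S})" by (intro Inter) auto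
  with empty obtain d where d: "d \<in> \<Inter>{S. W S}" by (metis ex_in_conv)
  have "W {d}"
    using ultra[of "{d}"] d by blast
  then have "W S \<longleftrightarrow> d \<in> S" for S
    using mono[of "{d}" S] Int[of S "{d}"] empty by (cases "d \<in> S") (auto simp: Int_absorb2)
  then show ?thesis by blast
qed

locale level_SP_aggregator =
  fixes L :: "real set" and \<psi> :: "('n::finite \<Rightarrow> real measure) \<Rightarrow> real measure"
  assumes interval: "is_interval L" and PAF: "is_PAF L \<psi>" and LSP: "level_SP L \<psi>"
    and unanimity: "unanimous L \<psi>" and SPP: "strong_plausibility_preserving L \<psi>"
begin

abbreviation F :: "real measure \<Rightarrow> real \<Rightarrow> real" where
  "F p a \<equiv> cdf_of L p a"

lemma aggregate_in_probs: "ps \<in> profiles L \<Longrightarrow> \<psi> ps \<in> probs L"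
  using PAF by (simp add: is_PAF_def)

lemma cdf_aggregate_update_same_side:
  assumes ps: "ps \<in> profiles L" and q: "q \<in> probs L" and a: "a \<in> L"
    and side: "same_side (F (\<psi> ps) a) (F (ps i) a) (F q a)"
  shows "F (\<psi> (ps(i := q))) a = F (\<psi> ps) a"
proof -
  have ps': "ps(i := q) \<in> profiles L" by (rule profiles_update[OF ps q])
  have undo: "(ps(i := q))(i := ps i) = ps" by simp
  have lsp: "(F (ps i) a < F (\<psi> ps) a \<longrightarrow> F (\<psi> ps) a \<le> F (\<psi> (ps(i := q))) a) \<and>
      (F (\<psi> ps) a < F (ps i) a \<longrightarrow> F (\<psi> (ps(i := q))) a \<le> F (\<psi> ps) a)"
    if "ps \<in> profiles L" "q \<in> probs L" for ps q
    using LSP a that unfolding level_SP_def by blast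
  \<comment> \<open>Level-SP, applied to the change of report and to its reversal, pins the aggregate.\<close>
  note forth = lsp[OF ps q] and reverse = lsp[OF ps' profilesD[where i = i, OF ps], unfolded undo]
  show ?thesis using side forth reverse by (auto simp: same_side_def)
qed

lemma cdf_aggregate_same_side:
  assumes ps: "ps \<in> profiles L" and qs: "qs \<in> profiles L" and a: "a \<in> L"
    and side: "\<And>i. same_side (F (\<psi> ps) a) (F (ps i) a) (F (qs i) a)"
  shows "F (\<psi> qs) a = F (\<psi> ps) a"
proof -
  define mixed where "mixed S = (\<lambda>i. if i \<in> S then qs i else ps i)" for S
  have mixed: "mixed S \<in> profiles L" for S
    using ps qs by (auto simp: mixed_def profiles_def)
  have "F (\<psi> (mixed S)) a = F (\<psi> ps) a" if "finite S" for S
    using that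
  proof (induction S rule: finite_induct)
    case empty
    then show ?case by (simp add: mixed_def)
  next
    case (insert j S)
    have "mixed S j = ps j" using insert.hyps by (simp add: mixed_def)
    then have "F (\<psi> ((mixed S)(j := qs j))) a = F (\<psi> ps) a"
      using cdf_aggregate_update_same_side[OF mixed profilesD[where i = j, OF qs] a, where i = j]
        side[of j] insert.IH by simp
    moreover have "mixed (insert j S) = (mixed S)(j := qs j)" by (auto simp: mixed_def)
    ultimately show ?case by (simp only:)
  qed
  moreover have "mixed UNIV = qs" by (simp add: mixed_def)
  ultimately show ?thesis by (metis finite)
qed

lemma cdf_aggregate_local:
  assumes "ps \<in> profiles L" "qs \<in> profiles L" "a \<in> L" "\<And>i. F (ps i) a = F (qs i) a"
  shows "F (\<psi> qs) a = F (\<psi> ps) a"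
  using assms by (intro cdf_aggregate_same_side) (auto simp: same_side_def)

lemma cdf_aggregate_between:
  assumes ps: "ps \<in> profiles L" and a: "a \<in> L"
  shows "\<exists>i. F (ps i) a \<le> F (\<psi> ps) a" and "\<exists>i. F (\<psi> ps) a \<le> F (ps i) a"
proof -
  let ?t = "F (\<psi> ps) a" and ?k = "undefined :: 'n"
  have "\<not> ((\<forall>i. ?t < F (ps i) a) \<or> (\<forall>i. F (ps i) a < ?t))"
  proof
    assume separated: "(\<forall>i. ?t < F (ps i) a) \<or> (\<forall>i. F (ps i) a < ?t)"
    \<comment> \<open>Moving every voter to the report of an arbitrary voter k keeps each report on its
      side of the aggregate, so the aggregate stays put; but by unanimity it becomes that report.\<close>
    have "F (\<psi> (\<lambda>_. ps ?k)) a = ?t"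
      using separated
      by (intro cdf_aggregate_same_side[OF ps profiles_const[OF profilesD[OF ps]] a])
        (auto simp: same_side_def)
    moreover have "\<psi> (\<lambda>_. ps ?k) = ps ?k"
      using unanimity profilesD[OF ps] by (simp add: unanimous_def)
    ultimately show False using separated by (metis less_irrefl)
  qed
  then show "\<exists>i. F (ps i) a \<le> ?t" "\<exists>i. ?t \<le> F (ps i) a" by (auto simp: not_less)
qed

lemma cdf_aggregate_unanimous_level:
  assumes "ps \<in> profiles L" "a \<in> L" "\<And>i. F (ps i) a = t"
  shows "F (\<psi> ps) a = t"
  using cdf_aggregate_between[OF assms(1,2)] assms(3) by force

text \<open>At the top of L, if there is one, every CDF equals 1; all other points of L are proper
  levels.\<close>

definition proper_level :: "real \<Rightarrow> bool" where
  "proper_level a \<longleftrightarrow> a \<in> L \<and> (\<exists>c\<in>L. a < c)"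

lemma proper_level_chain:
  assumes "proper_level a"
  obtains z :: "nat \<Rightarrow> real" where "z 0 = a" "strict_mono z" "\<And>k. proper_level (z k)"
proof -
  obtain c where a: "a \<in> L" and c: "c \<in> L" "a < c" using assms by (auto simp: proper_level_def)
  define z where "z k = c - (c - a) / 2 ^ k" for k :: nat
  have mono: "strict_mono z"
    unfolding strict_mono_Suc_iff z_def using c by (simp add: field_simps)
  have proper: "proper_level (z k)" for k
  proof -
    have "(c - a) / 2 ^ k \<le> (c - a) / 1"
      using c by (intro divide_left_mono) auto
    moreover have "0 < (c - a) / 2 ^ k" using c by simp
    ultimately have "a \<le> z k" "z k < c" by (auto simp: z_def)
    then show ?thesis
      using mem_is_interval_1_I[OF interval a c(1)] c(1) by (auto simp: proper_level_def)
  qed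
  have "z 0 = a" by (simp add: z_def)
  then show ?thesis using mono proper by (rule that)
qed

lemma aggregate_charges_one_of:
  assumes P: "P \<in> profiles L" and fin: "finite \<A>" and sets: "\<A> \<subseteq> sets (restrict_space borel L)"
    and charged: "\<And>i. \<exists>A\<in>\<A>. 0 < measure (P i) A"
  shows "\<exists>A\<in>\<A>. 0 < measure (\<psi> P) A"
proof -
  have U: "\<Union>\<A> \<in> sets (restrict_space borel L)" using fin sets by auto
  have "0 < measure (P i) (\<Union>\<A>)" for i
  proof -
    interpret finite_measure "P i" using finite_measure_probs[OF profilesD[OF P]] .
    obtain A where "A \<in> \<A>" "0 < measure (P i) A" using charged[of i] by blast
    moreover have "measure (P i) A \<le> measure (P i) (\<Union>\<A>)"
      using \<open>A \<in> \<A>\<close> U sets probs_sets[OF profilesD[OF P]] by (intro finite_measure_mono) auto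
    ultimately show ?thesis by linarith
  qed
  then have "0 < measure (\<psi> P) (\<Union>\<A>)"
    using SPP P U unfolding strong_plausibility_preserving_def by blast
  also have "\<dots> \<le> (\<Sum>A\<in>\<A>. measure (\<psi> P) A)"
    using finite_measure.finite_measure_subadditive_finite[
        OF finite_measure_probs[OF aggregate_in_probs[OF P]],
        of \<A> "\<lambda>A. A"] fin sets probs_sets[OF aggregate_in_probs[OF P]] by simp
  finally show ?thesis by (meson not_le sum_nonpos)
qed

lemma two_point_aggregate_attains_weight:
  assumes a: "a \<in> L" and c: "c \<in> L" and u: "a < u" "u < c"
    and w: "\<And>i. 0 \<le> w i" "\<And>i. w i < 1"
    and null: "measure (\<psi> (\<lambda>i. two_point L a c (w i))) {u} = 0"
  shows "\<exists>i. F (\<psi> (\<lambda>i. two_point L a c (w i))) u = w i"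
proof (rule ccontr)
  let ?Q = "\<lambda>i. two_point L a c (w i)"
  define s where "s = F (\<psi> ?Q) u"
  assume "\<not> ?thesis"
  then have ne: "w i \<noteq> s" for i unfolding s_def by metis
  have uL: "u \<in> L" using mem_is_interval_1_I[OF interval a c] u by auto
  have "0 < min \<bar>s - w i\<bar> (1 - w i)" for i using ne[of i] w(2) by auto
  then obtain \<epsilon> where "0 < \<epsilon>" "\<forall>i. \<epsilon> < min \<bar>s - w i\<bar> (1 - w i)"
    by (rule finite_pos_lower_bound)
  then have \<epsilon>: "0 < \<epsilon>" "\<epsilon> < \<bar>s - w i\<bar>" "\<epsilon> < 1 - w i" for i by auto
  define R where "R i = point_mixture L [(a, w i), (u, \<epsilon>), (c, 1 - w i - \<epsilon>)]" for i
  have wf: "pmf_of_list_wf [(a, w i), (u, \<epsilon>), (c, 1 - w i - \<epsilon>)]" for i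
    using w(1) \<epsilon>(1) \<epsilon>(3)[of i] by (simp add: pmf_of_list_wf_def)
  have R: "R \<in> profiles L"
    using a uL c by (auto simp: R_def intro!: profilesI point_mixture_in_probs[OF wf])
  have cdf_R: "F (R i) x =
      (if x < a then 0 else if x < u then w i else if x < c then w i + \<epsilon> else 1)"
    for i x
    unfolding R_def using a uL c u by (subst cdf_point_mixture[OF wf]) auto
  have w_le: "w i \<le> 1" for i using w(2)[of i] by simp
  have Q: "?Q \<in> profiles L"
    using a c w(1) w_le by (auto intro!: profilesI two_point_in_probs)
  have cdf_Q: "F (?Q i) x = (if x < a then 0 else if x < c then w i else 1)" for i x
    using a c u w(1) w_le by (intro cdf_two_point) auto
  \<comment> \<open>Every voter adds an atom at u; this changes no report below u and moves no report
    at u across the aggregate value s.\<close>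
  have "F (\<psi> R) x = F (\<psi> ?Q) x" if "x \<in> L" "x \<le> u" for x
  proof (cases "x = u")
    case True
    have "same_side s (F (?Q i) u) (F (R i) u)" for i
      using \<epsilon>(1) \<epsilon>(2)[of i] u by (auto simp: cdf_Q cdf_R same_side_def abs_if split: if_splits)
    then show ?thesis unfolding True s_def by (intro cdf_aggregate_same_side[OF Q R uL])
  next
    case False
    then show ?thesis
      using that u by (intro cdf_aggregate_local[OF Q R]) (auto simp: cdf_Q cdf_R)
  qed
  then have "measure (\<psi> R) {u} = measure (\<psi> ?Q) {u}"
    by (intro measure_singleton_eq_if_cdf_of_eq[OF interval aggregate_in_probs[OF R]
          aggregate_in_probs[OF Q] uL])
  moreover have "0 < measure (\<psi> R) {u}"
    using aggregate_charges_one_of[OF R, of "{{u}}"] uL \<epsilon>(1) a c u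
    by (auto simp: R_def measure_point_mixture[OF wf])
  ultimately show False using null by simp
qed

lemma cdf_aggregate_eq_voter:
  assumes a: "proper_level a" and ps: "ps \<in> profiles L"
  shows "\<exists>i. F (\<psi> ps) a = F (ps i) a"
proof (rule ccontr)
  assume no_voter: "\<not> ?thesis"
  define t where "t = F (\<psi> ps) a"
  have ne: "F (ps i) a \<noteq> t" for i using no_voter unfolding t_def by metis
  obtain c where aL: "a \<in> L" and c: "c \<in> L" "a < c" using a by (auto simp: proper_level_def)
  obtain j where "t \<le> F (ps j) a" using cdf_aggregate_between(2)[OF ps aL] by (auto simp: t_def)
  then have "t < 1"
    using ne[of j] cdf_of_le_1[OF profilesD[where i = j, OF ps], where a = a] by linarith
  define h where "h = (t + 1) / 2"
  have h: "t < h" "h < 1" using \<open>t < 1\<close> by (auto simp: h_def)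
  \<comment> \<open>Reports above t are lowered to h < 1, which leaves room for an additional atom.\<close>
  define w where "w i = (if F (ps i) a < t then F (ps i) a else h)" for i
  have "0 \<le> t" unfolding t_def by (rule cdf_of_nonneg)
  then have w: "0 \<le> w i" "w i < 1" for i
    using h cdf_of_nonneg[of L "ps i" a] \<open>t < 1\<close> by (auto simp: w_def)
  let ?Q = "\<lambda>i. two_point L a c (w i)"
  have Q: "?Q \<in> profiles L"
    using aL c w(1) order.strict_implies_order[OF w(2)]
    by (auto intro!: profilesI two_point_in_probs)
  have "F (\<psi> ?Q) a = t"
  proof -
    have "same_side t (F (ps i) a) (F (?Q i) a)" for i
      using ne[of i] h aL c w[of i] by (auto simp: cdf_two_point w_def same_side_def)
    then show ?thesis unfolding t_def by (intro cdf_aggregate_same_side[OF ps Q aL])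
  qed
  then obtain b where b: "a < b" "F (\<psi> ?Q) b < h"
    using cdf_of_right_continuous[OF aggregate_in_probs[OF Q]] h(1) by metis
  have "finite_measure (\<psi> ?Q)"
    using aggregate_in_probs[OF Q] by (rule finite_measure_probs)
  then obtain u where u: "a < u" "u < min b c" and null: "measure (\<psi> ?Q) {u} = 0"
    by (rule exists_null_singleton_between[where b = "min b c"]) (use b(1) c(2) in auto)
  obtain i where i: "F (\<psi> ?Q) u = w i"
    using two_point_aggregate_attains_weight[OF aL c(1) u(1) _ w null] u(2) by auto
  have "t \<le> F (\<psi> ?Q) u" "F (\<psi> ?Q) u < h"
    using cdf_of_mono[OF aggregate_in_probs[OF Q], of a u]
      cdf_of_mono[OF aggregate_in_probs[OF Q], of u b]
      \<open>F (\<psi> ?Q) a = t\<close> b(2) u by auto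
  then show False using i by (auto simp: w_def split: if_splits)
qed

subsection \<open>Decisive coalitions\<close>

definition decisive :: "real \<Rightarrow> 'n set \<Rightarrow> bool" where
  "decisive a S \<longleftrightarrow> (\<exists>ps\<in>profiles L. (\<forall>i. F (ps i) a = of_bool (i \<in> S)) \<and> F (\<psi> ps) a = 1)"

definition indicator_profile :: "real \<Rightarrow> real \<Rightarrow> 'n set \<Rightarrow> 'n \<Rightarrow> real measure" where
  "indicator_profile a c S i = two_point L a c (of_bool (i \<in> S))"

lemma indicator_profile_in_profiles: "a \<in> L \<Longrightarrow> c \<in> L \<Longrightarrow> indicator_profile a c S \<in> profiles L"
  by (auto simp: indicator_profile_def intro!: profilesI two_point_in_probs)

lemma cdf_indicator_profile:
  "a \<in> L \<Longrightarrow> c \<in> L \<Longrightarrow> a \<le> x \<Longrightarrow> x < c \<Longrightarrow> F (indicator_profile a c S i) x = of_bool (i \<in> S)"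
  unfolding indicator_profile_def by (subst cdf_two_point) auto

lemma cdf_aggregate_indicator:
  assumes a: "proper_level a" and ps: "ps \<in> profiles L"
    and ind: "\<And>i. F (ps i) a = of_bool (i \<in> S)"
  shows "F (\<psi> ps) a = of_bool (decisive a S)"
proof (cases "decisive a S")
  case True
  then obtain qs where "qs \<in> profiles L" "\<And>i. F (qs i) a = of_bool (i \<in> S)" "F (\<psi> qs) a = 1"
    unfolding decisive_def by blast
  with True show ?thesis
    using a ind cdf_aggregate_local[of qs ps a] ps by (auto simp: proper_level_def)
next
  case False
  then have "F (\<psi> ps) a \<noteq> 1" using ps ind unfolding decisive_def by blast
  moreover obtain i where "F (\<psi> ps) a = F (ps i) a" using cdf_aggregate_eq_voter[OF a ps] by blast
  ultimately show ?thesis using ind[of i] False by auto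
qed

lemma cdf_aggregate_eq_1_iff_decisive:
  assumes a: "proper_level a" and P: "P \<in> profiles L"
    and inside: "\<And>i. i \<in> S \<Longrightarrow> F (P i) a = 1" and outside: "\<And>i. i \<notin> S \<Longrightarrow> F (P i) a < 1"
  shows "F (\<psi> P) a = 1 \<longleftrightarrow> decisive a S"
proof -
  obtain c where aL: "a \<in> L" and c: "c \<in> L" "a < c" using a by (auto simp: proper_level_def)
  let ?B = "indicator_profile a c S"
  have B: "?B \<in> profiles L" by (rule indicator_profile_in_profiles[OF aL c(1)])
  have cdf_B: "F (?B i) a = of_bool (i \<in> S)" for i using aL c by (simp add: cdf_indicator_profile)
  have side: "same_side 1 (F (P i) a) (F (?B i) a)" "same_side 1 (F (?B i) a) (F (P i) a)" for i
    using inside[of i] outside[of i] by (auto simp: cdf_B same_side_def)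
  have "F (\<psi> P) a = 1 \<longleftrightarrow> F (\<psi> ?B) a = 1"
    using cdf_aggregate_same_side[OF P B aL] cdf_aggregate_same_side[OF B P aL] side by metis
  then show ?thesis using cdf_aggregate_indicator[OF a B cdf_B] by simp
qed

lemma cdf_aggregate_eq_0_iff_not_decisive:
  assumes a: "proper_level a" and P: "P \<in> profiles L"
    and inside: "\<And>i. i \<in> S \<Longrightarrow> 0 < F (P i) a" and outside: "\<And>i. i \<notin> S \<Longrightarrow> F (P i) a = 0"
  shows "F (\<psi> P) a = 0 \<longleftrightarrow> \<not> decisive a S"
proof -
  obtain c where aL: "a \<in> L" and c: "c \<in> L" "a < c" using a by (auto simp: proper_level_def)
  let ?B = "indicator_profile a c S"
  have B: "?B \<in> profiles L" by (rule indicator_profile_in_profiles[OF aL c(1)])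
  have cdf_B: "F (?B i) a = of_bool (i \<in> S)" for i using aL c by (simp add: cdf_indicator_profile)
  have side: "same_side 0 (F (P i) a) (F (?B i) a)" "same_side 0 (F (?B i) a) (F (P i) a)" for i
    using inside[of i] outside[of i] by (auto simp: cdf_B same_side_def)
  have "F (\<psi> P) a = 0 \<longleftrightarrow> F (\<psi> ?B) a = 0"
    using cdf_aggregate_same_side[OF P B aL] cdf_aggregate_same_side[OF B P aL] side by metis
  then show ?thesis using cdf_aggregate_indicator[OF a B cdf_B] by simp
qed

lemma decisive_upward:
  assumes a: "proper_level a" and b: "proper_level b" and ab: "a < b" and dec: "decisive a S"
  shows "decisive b S"
proof -
  obtain c where c: "c \<in> L" "b < c" using b by (auto simp: proper_level_def)
  have aL: "a \<in> L" using a by (simp add: proper_level_def)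
  let ?B = "indicator_profile a c S"
  have B: "?B \<in> profiles L" by (rule indicator_profile_in_profiles[OF aL c(1)])
  have cdf_B: "F (?B i) x = of_bool (i \<in> S)" if "a \<le> x" "x < c" for i x
    using aL c that by (simp add: cdf_indicator_profile)
  have "F (\<psi> ?B) a = 1" using cdf_aggregate_indicator[OF a B] cdf_B ab c dec by simp
  then have "F (\<psi> ?B) b = 1"
    using cdf_of_mono[OF aggregate_in_probs[OF B], of a b]
      cdf_of_le_1[OF aggregate_in_probs[OF B], of b]
      ab by simp
  then show ?thesis unfolding decisive_def using B cdf_B ab c by (auto intro!: bexI[of _ ?B])
qed

lemma decisive_iff_compl_not_decisive_above:
  assumes z0: "proper_level z0" and z1: "proper_level z1" and z2: "proper_level z2"
    and z3: "proper_level z3" and lt: "z0 < z1" "z1 < z2" "z2 < z3"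
  shows "decisive z0 S \<longleftrightarrow> \<not> decisive z2 (- S)"
proof -
  have L: "z0 \<in> L" "z1 \<in> L" "z2 \<in> L" "z3 \<in> L" using z0 z1 z2 z3 by (auto simp: proper_level_def)
  \<comment> \<open>Every voter charges one of {x \<le> z0}, (z1, z2] and one of (z0, z1], (z2, z3].\<close>
  define P where "P i = (if i \<in> S then two_point L z0 z3 (1/2) else two_point L z1 z2 (1/2))" for i
  have P: "P \<in> profiles L" using L by (auto simp: P_def intro!: profilesI two_point_in_probs)
  have cdf_P: "F (P i) x = (if i \<in> S then (if x < z0 then 0 else if x < z3 then 1/2 else 1)
      else (if x < z1 then 0 else if x < z2 then 1/2 else 1))" for i x
    using L lt by (auto simp: P_def cdf_two_point)
  have mass_P: "measure (P i) A =
      (if i \<in> S then (if z0 \<in> A then 1/2 else 0) + (if z3 \<in> A then 1/2 else 0)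
      else (if z1 \<in> A then 1/2 else 0) + (if z2 \<in> A then 1/2 else 0))"
    if "A \<in> sets (restrict_space borel L)" for i A
    using L that by (auto simp: P_def measure_two_point)
  let ?G = "F (\<psi> P)"
  have G0: "?G z0 = 0 \<longleftrightarrow> \<not> decisive z0 S"
    using lt by (intro cdf_aggregate_eq_0_iff_not_decisive[OF z0 P]) (auto simp: cdf_P)
  have G0_cases: "?G z0 = 0 \<or> ?G z0 = 1/2"
    using cdf_aggregate_eq_voter[OF z0 P] lt by (auto simp: cdf_P split: if_splits)
  have G1: "?G z1 = 1/2"
    using lt by (intro cdf_aggregate_unanimous_level[OF P L(2)]) (auto simp: cdf_P)
  have G2: "?G z2 = 1 \<longleftrightarrow> decisive z2 (- S)"
    using lt by (intro cdf_aggregate_eq_1_iff_decisive[OF z2 P]) (auto simp: cdf_P)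
  have G2_cases: "?G z2 = 1/2 \<or> ?G z2 = 1"
    using cdf_aggregate_eq_voter[OF z2 P] lt by (auto simp: cdf_P split: if_splits)
  have G3: "?G z3 = 1"
    using lt by (intro cdf_aggregate_unanimous_level[OF P L(4)]) (auto simp: cdf_P)
  have "\<exists>A\<in>{{x \<in> L. x \<le> z0}, {x \<in> L. z1 < x \<and> x \<le> z2}}. 0 < measure (\<psi> P) A"
    using L lt by (intro aggregate_charges_one_of[OF P]) (auto simp: mass_P)
  then have low: "0 < ?G z0 \<or> ?G z1 < ?G z2"
    using lt by (simp add: measure_Ioc_cdf_of[OF aggregate_in_probs[OF P]] cdf_of_def)
  have "\<exists>A\<in>{{x \<in> L. z0 < x \<and> x \<le> z1}, {x \<in> L. z2 < x \<and> x \<le> z3}}. 0 < measure (\<psi> P) A"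
    using L lt by (intro aggregate_charges_one_of[OF P]) (auto simp: mass_P)
  then have high: "?G z0 < ?G z1 \<or> ?G z2 < ?G z3"
    using lt by (simp add: measure_Ioc_cdf_of[OF aggregate_in_probs[OF P]])
  show ?thesis using G0 G0_cases G1 G2 G2_cases G3 low high by auto
qed

lemma decisive_compl_iff:
  assumes u: "proper_level u"
  shows "decisive u (- S) \<longleftrightarrow> \<not> decisive u S"
proof -
  obtain z :: "nat \<Rightarrow> real"
    where z0: "z 0 = u" and mono: "strict_mono z" and proper: "\<And>k. proper_level (z k)"
    using proper_level_chain[OF u] by blast
  have lt: "z k < z l" if "k < l" for k l using mono that by (simp add: strict_mono_less)
  have step: "decisive (z k) T \<longleftrightarrow> \<not> decisive (z (k + 2)) (- T)" for k T
    by (rule decisive_iff_compl_not_decisive_above) (auto intro: proper lt)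
  have up: "decisive (z k) T \<Longrightarrow> decisive (z (k + 2)) T" for k T
    by (rule decisive_upward) (auto intro: proper lt)
  show ?thesis
    using step[of 0 S] step[of 0 "- S"] step[of 2 S] up[of 0 "- S"] up[of 2 "- S"] z0
    by (auto simp: numeral_eq_Suc)
qed

lemma decisive_level_independent:
  assumes a: "proper_level a" and b: "proper_level b"
  shows "decisive a S \<longleftrightarrow> decisive b S"
proof -
  have "decisive a S \<longleftrightarrow> decisive b S" if "proper_level a" "proper_level b" "a < b" for a b
    using decisive_upward[OF that, of S] decisive_upward[OF that, of "- S"]
      decisive_compl_iff[OF that(1), of S] decisive_compl_iff[OF that(2), of S] by blast
  then show ?thesis using a b by (cases a b rule: linorder_cases) auto
qed

lemma not_decisive_empty:
  assumes a: "proper_level a"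
  shows "\<not> decisive a {}"
proof -
  obtain c where aL: "a \<in> L" and c: "c \<in> L" "a < c" using a by (auto simp: proper_level_def)
  let ?B = "indicator_profile a c {}"
  have B: "?B \<in> profiles L" by (rule indicator_profile_in_profiles[OF aL c(1)])
  have cdf_B: "F (?B i) a = 0" for i using aL c by (simp add: cdf_indicator_profile)
  show ?thesis
    using cdf_aggregate_eq_0_iff_not_decisive[OF a B, of "{}"]
      cdf_aggregate_unanimous_level[OF B aL cdf_B]
      cdf_B by simp
qed

lemma decisive_mono:
  assumes a: "proper_level a" and S: "decisive a S" and ST: "S \<subseteq> T"
  shows "decisive a T"
proof -
  obtain c where aL: "a \<in> L" and c: "c \<in> L" "a < c" using a by (auto simp: proper_level_def)
  define v where "v = (\<lambda>i. if i \<in> S then 1 else if i \<in> T then 1/2 else 0 :: real)"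
  let ?P = "\<lambda>i. two_point L a c (v i)"
  have P: "?P \<in> profiles L" using aL c by (auto simp: v_def intro!: profilesI two_point_in_probs)
  have "F (\<psi> ?P) a = 1"
    using S by (intro cdf_aggregate_eq_1_iff_decisive[OF a P, THEN iffD2])
      (auto simp: v_def cdf_two_point aL c)
  moreover have "F (\<psi> ?P) a = 0 \<longleftrightarrow> \<not> decisive a T"
    using ST by (intro cdf_aggregate_eq_0_iff_not_decisive[OF a P])
      (auto simp: v_def cdf_two_point aL c)
  ultimately show ?thesis by simp
qed

lemma decisive_Int_along_chain:
  fixes z :: "nat \<Rightarrow> real"
  assumes mono: "strict_mono z" and proper: "\<And>k. proper_level (z k)"
    and S: "decisive (z 4) S" and T: "decisive (z 2) (S \<inter> T \<union> - S)"
  shows "decisive (z 1) (S \<inter> T) \<or> decisive (z 3) (S \<inter> T)"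
proof (rule ccontr)
  assume "\<not> ?thesis"
  then have not1: "\<not> decisive (z 1) (S \<inter> T)" and not3: "\<not> decisive (z 3) (S \<inter> T)" by auto
  have L: "z k \<in> L" for k using proper by (simp add: proper_level_def)
  note lt = strict_mono_less[OF mono] strict_mono_less_eq[OF mono]
  \<comment> \<open>Each of the three groups S \<inter> T, S - T and - S puts one of its two atoms into the set
    charged below, where the aggregate turns out to be flat.\<close>
  define P where "P i = (if i \<in> S \<inter> T then two_point L (z 0) (z 1) (1/2)
      else if i \<in> S then two_point L (z 3) (z 4) (1/2) else two_point L (z 2) (z 5) (1/2))" for i
  have P: "P \<in> profiles L" using L by (auto simp: P_def intro!: profilesI two_point_in_probs)
  have cdf_P: "F (P i) x = (if i \<in> S \<inter> T then (if x < z 0 then 0 else if x < z 1 then 1/2 else 1)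
      else if i \<in> S then (if x < z 3 then 0 else if x < z 4 then 1/2 else 1)
      else (if x < z 2 then 0 else if x < z 5 then 1/2 else 1))" for i x
    using L by (auto simp: P_def cdf_two_point lt)
  let ?G = "F (\<psi> P)"
  have mono_G: "?G (z k) \<le> ?G (z l)" if "k \<le> l" for k l
    using cdf_of_mono[OF aggregate_in_probs[OF P]] that by (simp add: lt)
  have G1: "?G (z 1) = 0"
    using not1 by (subst cdf_aggregate_eq_0_iff_not_decisive[OF proper P, where S = "S \<inter> T"])
      (auto simp: cdf_P lt)
  then have G0: "?G (z 0) = 0"
    using mono_G[of 0 1] cdf_of_nonneg[of L "\<psi> P" "z 0"] by simp
  have G3: "?G (z 3) = 1/2"
  proof -
    have "?G (z 3) \<noteq> 1"
      using not3 by (subst cdf_aggregate_eq_1_iff_decisive[OF proper P, where S = "S \<inter> T"])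
        (auto simp: cdf_P lt)
    then show ?thesis
      using cdf_aggregate_eq_voter[OF proper[of 3] P] by (auto simp: cdf_P lt split: if_splits)
  qed
  have G2: "?G (z 2) = 1/2"
  proof -
    have "?G (z 2) \<noteq> 0"
      using T by (subst cdf_aggregate_eq_0_iff_not_decisive[OF proper P, where S = "S \<inter> T \<union> - S"])
        (auto simp: cdf_P lt)
    then show ?thesis
      using cdf_aggregate_eq_voter[OF proper[of 2] P] mono_G[of 2 3] G3
      by (auto simp: cdf_P lt split: if_splits)
  qed
  have G4: "?G (z 4) = 1"
    using S by (subst cdf_aggregate_eq_1_iff_decisive[OF proper P, where S = S])
      (auto simp: cdf_P lt)
  have G5: "?G (z 5) = 1"
    by (rule cdf_aggregate_unanimous_level[OF P L[of 5]]) (auto simp: cdf_P lt)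
  have "\<exists>A\<in>{{x \<in> L. x \<le> z 0}, {x \<in> L. z 2 < x \<and> x \<le> z 3}, {x \<in> L. z 4 < x \<and> x \<le> z 5}}.
      0 < measure (\<psi> P) A"
    using L by (intro aggregate_charges_one_of[OF P]) (auto simp: P_def measure_two_point lt)
  then show False
    using G0 G2 G3 G4 G5
    by (auto simp: measure_Ioc_cdf_of[OF aggregate_in_probs[OF P]] cdf_of_def lt)
qed

lemma decisive_Int:
  assumes a: "proper_level a" and S: "decisive a S" and T: "decisive a T"
  shows "decisive a (S \<inter> T)"
proof -
  obtain z :: "nat \<Rightarrow> real" where mono: "strict_mono z" and proper: "\<And>k. proper_level (z k)"
    using proper_level_chain[OF a] by blast
  have dec: "decisive (z k) X \<longleftrightarrow> decisive a X" for k X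
    by (rule decisive_level_independent[OF proper a])
  have "decisive a (S \<inter> T \<union> - S)" by (rule decisive_mono[OF a T]) blast
  then show ?thesis using decisive_Int_along_chain[OF mono proper, of S T] S dec by auto
qed

lemma decisive_principal:
  assumes a: "proper_level a"
  obtains d where "\<And>b S. proper_level b \<Longrightarrow> decisive b S \<longleftrightarrow> d \<in> S"
proof -
  have "\<exists>d. \<forall>S. decisive a S \<longleftrightarrow> d \<in> S"
  proof (rule finite_ultrafilter_principal)
    show "\<not> decisive a {}" by (rule not_decisive_empty[OF a])
    show "decisive a T" if "decisive a S" "S \<subseteq> T" for S T by (rule decisive_mono[OF a that])
    show "decisive a (S \<inter> T)" if "decisive a S" "decisive a T" for S T
      by (rule decisive_Int[OF a that])
    show "decisive a S \<or> decisive a (- S)" for S using decisive_compl_iff[OF a] by blast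
  qed
  then obtain d where "\<And>S. decisive a S \<longleftrightarrow> d \<in> S" by blast
  then have "decisive b S \<longleftrightarrow> d \<in> S" if "proper_level b" for b S
    using decisive_level_independent[OF a that, of S] by simp
  then show ?thesis by (rule that)
qed

lemma cdf_aggregate_eq_dictator:
  assumes a: "proper_level a" and d: "\<And>S. decisive a S \<longleftrightarrow> d \<in> S" and ps: "ps \<in> profiles L"
  shows "F (\<psi> ps) a = F (ps d) a"
proof (rule ccontr)
  assume ne: "F (\<psi> ps) a \<noteq> F (ps d) a"
  obtain c where aL: "a \<in> L" and c: "c \<in> L" "a < c" using a by (auto simp: proper_level_def)
  define t where "t = F (\<psi> ps) a"
  define v where "v i = F (ps i) a" for i
  have v: "0 \<le> v i" "v i \<le> 1" for i
    unfolding v_def by (auto intro: cdf_of_nonneg cdf_of_le_1 profilesD[OF ps])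
  have t: "0 \<le> t" "t \<le> 1"
    unfolding t_def by (auto intro: cdf_of_nonneg cdf_of_le_1 aggregate_in_probs[OF ps])
  \<comment> \<open>Only the side of each report relative to t matters, so the reports can be rounded to 0,
    t or 1.\<close>
  define g where "g = (\<lambda>i. if v i < t then 0 else if t < v i then 1 else t)"
  let ?G = "\<lambda>i. two_point L a c (g i)"
  have G: "?G \<in> profiles L" using aL c t by (auto simp: g_def intro!: profilesI two_point_in_probs)
  have cdf_G: "F (two_point L a c (g i)) a = g i" for i
    using aL c t by (simp add: cdf_two_point g_def)
  have "F (\<psi> ?G) a = t"
  proof -
    have "same_side t (F (ps i) a) (F (?G i) a)" for i
      using v[of i] t unfolding cdf_G by (auto simp: g_def v_def same_side_def)
    then show ?thesis unfolding t_def by (intro cdf_aggregate_same_side[OF ps G aL])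
  qed
  moreover have "t < v d \<or> v d < t" using ne by (auto simp: t_def v_def)
  moreover have "F (\<psi> ?G) a = 1" if "t < v d"
    using that d v[of d]
    by (subst cdf_aggregate_eq_1_iff_decisive[OF a G, where S = "{i. t < v i}"])
      (unfold cdf_G, auto simp: g_def)
  moreover have "F (\<psi> ?G) a = 0" if "v d < t"
    using that d v[of d]
    by (subst cdf_aggregate_eq_0_iff_not_decisive[OF a G, where S = "{i. t \<le> v i}"])
      (unfold cdf_G, auto simp: g_def)
  ultimately show False using v[of d] t by auto
qed

lemma dictatorial_if_nondegenerate:
  assumes "\<exists>x\<in>L. \<exists>y\<in>L. x \<noteq> y"
  shows "dictatorial L \<psi>"
proof -
  obtain x y where "x \<in> L" "y \<in> L" "x < y" using assms by (metis linorder_neqE_linordered_idom)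
  then have "proper_level x" by (auto simp: proper_level_def)
  then obtain d where d: "\<And>b S. proper_level b \<Longrightarrow> decisive b S \<longleftrightarrow> d \<in> S"
    using decisive_principal by blast
  have "\<psi> ps = ps d" if ps: "ps \<in> profiles L" for ps
  proof (rule probs_eqI_cdf_of[OF interval aggregate_in_probs[OF ps] profilesD[OF ps]])
    fix a assume a: "a \<in> L"
    show "F (\<psi> ps) a = F (ps d) a"
    proof (cases "proper_level a")
      case True
      then show ?thesis using d ps by (intro cdf_aggregate_eq_dictator) auto
    next
      case False
      \<comment> \<open>a is the largest point of L, where every CDF equals 1.\<close>
      then have "L \<subseteq> {..a}" using a by (auto simp: proper_level_def not_less)
      then show ?thesis
        using cdf_of_eq_1[OF aggregate_in_probs[OF ps]] cdf_of_eq_1[OF profilesD[OF ps]] by simp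
    qed
  qed
  then show ?thesis unfolding dictatorial_def by blast
qed

end

lemma dictatorial_imp_level_SP: "dictatorial L \<psi> \<Longrightarrow> level_SP L \<psi>"
  by (auto simp: dictatorial_def level_SP_def profiles_update)

lemma dictatorial_imp_unanimous: "dictatorial L \<psi> \<Longrightarrow> unanimous L \<psi>"
  by (auto simp: dictatorial_def unanimous_def profiles_const)

lemma dictatorial_imp_strong_plausibility_preserving:
  "dictatorial L \<psi> \<Longrightarrow> strong_plausibility_preserving L \<psi>"
  by (auto simp: dictatorial_def strong_plausibility_preserving_def)

theorem mainTheorem7:
  fixes L :: "real set"
    and \<psi> :: "('n::finite \<Rightarrow> real measure) \<Rightarrow> real measure"
  assumes "is_interval L"
    and "\<exists>x \<in> L. \<exists>y \<in> L. x \<noteq> y"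
    and "is_PAF L \<psi>"
  shows "(level_SP L \<psi> \<and> unanimous L \<psi> \<and> strong_plausibility_preserving L \<psi>)
           \<longleftrightarrow> dictatorial L \<psi>"
proof
  assume "level_SP L \<psi> \<and> unanimous L \<psi> \<and> strong_plausibility_preserving L \<psi>"
  then interpret level_SP_aggregator L \<psi> using assms(1,3) by unfold_locales auto
  show "dictatorial L \<psi>" by (rule dictatorial_if_nondegenerate[OF assms(2)])
next
  assume "dictatorial L \<psi>"
  then show "level_SP L \<psi> \<and> unanimous L \<psi> \<and> strong_plausibility_preserving L \<psi>"
    by (simp add: dictatorial_imp_level_SP dictatorial_imp_unanimous
        dictatorial_imp_strong_plausibility_preserving)
qed

end
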